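(* For any $\alpha\in(0,1/2)$ and any (possibly $K$-dependent) integer $t$ with $0\le t\le K^{1+\alpha}$, \[ \frac{C_t-\widetilde C_t}{K}\to0\quad\text{in probability as }K\to\infty. \]
   Context: Incremental construction. Fix an integer $K\ge2$, $[n]=\{1,\dots,n\}$. A random $K\times K$ matrix $\Psi$ is filled with $1,\dots,K^2$, the integer $s$ placed at step $s$. After step $t$, $R_t$, $C_t$ are the numbers of nonempty rows and columns (nonempty rows are $1,\dots,R_t$, nonempty columns $1,\dots,C_t$), and $M_t$ is the submatrix with rows $[R_t]$, columns $[C_t]$; $R_0=C_0=0$. Step 1: $\Psi(1,1)=1$ ($R_1=C_1=1$), counted as creating a new row and a new column. For $t=1,\dots,K^2-1$, step $t+1$: with conditional probability $\rho_{t+1}=\frac{(K-R_t)K}{K^2-t}$ a new row is created ($R_{t+1}=R_t+1$), and independently with probability $\frac{K-C_t}{K}$ also a new column ($C_{t+1}=C_t+1$, $\Psi(R_{t+1},C_{t+1})=t+1$), otherwise $C_{t+1}=C_t$ and $\Psi(R_{t+1},Z)=t+1$ with $Z$ uniform in $[C_t]$. With probability $1-\rho_{t+1}$, no new row is created ($R_{t+1}=R_t$) and a uniformly random empty cell $(X,Y)$ among rows $[R_t]$ is chosen by rejection sampling: cells are drawn independently and uniformly among the $R_tK$ cells of rows $[R_t]$ until an empty one is drawn; $U_{t+1}=1$ if the first draw is empty, $U_{t+1}=0$ otherwise. If $Y>C_t$ then $C_{t+1}=C_t+1$ and $\Psi(X,C_{t+1})=t+1$; otherwise $C_{t+1}=C_t$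 and $\Psi(X,Y)=t+1$. Define $\widetilde C_0=0$ and, for $s\ge1$: $\widetilde C_s-\widetilde C_{s-1}=C_s-C_{s-1}$, except at steps $s$ where no new row is created and $U_s=0$, where $\widetilde C_s=\widetilde C_{s-1}$. *)

theory Defs
  imports "HOL-Probability.Probability"
begin

text \<open>State after step t: (R_t, C_t, Ctilde_t, Psi), where Psi (i,j) is the entry of
  cell (i,j) (rows/columns indexed from 1), and 0 means the cell is empty.\<close>

type_synonym mstate = "nat \<times> nat \<times> nat \<times> (nat \<times> nat \<Rightarrow> nat)"

definition st_R :: "mstate \<Rightarrow> nat" where "st_R s = fst s"
definition st_C :: "mstate \<Rightarrow> nat" where "st_C s = fst (snd s)"
definition st_Ct :: "mstate \<Rightarrow> nat" where "st_Ct s = fst (snd (snd s))"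
definition st_Psi :: "mstate \<Rightarrow> (nat \<times> nat \<Rightarrow> nat)" where "st_Psi s = snd (snd (snd s))"

text \<open>The first draw is uniform over all R*K cells; if it is empty it is accepted (U = True),
  otherwise the accepted cell is the first empty cell among further i.i.d. uniform draws,
  which is uniform over the empty cells (U = False).\<close>

definition rejection_sample :: "nat \<Rightarrow> nat \<Rightarrow> (nat \<times> nat \<Rightarrow> nat) \<Rightarrow> (bool \<times> (nat \<times> nat)) pmf" where
  "rejection_sample K R Psi =
     bind_pmf (pmf_of_set ({1..R} \<times> {1..K})) (\<lambda>d.
       if Psi d = 0 then return_pmf (True, d)
       else map_pmf (\<lambda>c. (False, c)) (pmf_of_set {c \<in> {1..R} \<times> {1..K}. Psi c = 0}))"

definition step :: "nat \<Rightarrow> nat \<Rightarrow> mstate \<Rightarrow> mstate pmf" where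
  "step K t s =
    (let R = st_R s; C = st_C s; Ct = st_Ct s; Psi = st_Psi s in
     if t = 0 then return_pmf (1, 1, 1, Psi((1,1) := 1))
     else if K^2 \<le> t then return_pmf s
     else bind_pmf (bernoulli_pmf (real ((K - R) * K) / real (K^2 - t))) (\<lambda>newrow.
       if newrow then
         bind_pmf (bernoulli_pmf (real (K - C) / real K)) (\<lambda>newcol.
           if newcol then return_pmf (R + 1, C + 1, Ct + 1, Psi((R + 1, C + 1) := t + 1))
           else map_pmf (\<lambda>z. (R + 1, C, Ct, Psi((R + 1, z) := t + 1))) (pmf_of_set {1..C}))
       else
         map_pmf (\<lambda>(U, (x, y)).
            if C < y then (R, C + 1, (if U then Ct + 1 else Ct), Psi((x, C + 1) := t + 1))
            else (R, C, Ct, Psi((x, y) := t + 1)))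
           (rejection_sample K R Psi)))"

fun proc :: "nat \<Rightarrow> nat \<Rightarrow> mstate pmf" where
  "proc K 0 = return_pmf (0, 0, 0, (\<lambda>_. 0))"
| "proc K (Suc t) = bind_pmf (proc K t) (step K t)"

end

(* C_t - C~_t grows only at a step that creates no new row and whose first rejection draw
   hits a filled cell. Given the state after step s, such a step has probability at most
   (R K / (K^2 - s)) * (s / (R K)) = s / (K^2 - s): the first factor bounds the chance of
   no new row, the second the fraction of filled cells among the R K cells of the nonempty
   rows. Hence E (C_t - C~_t) <= sum_{s<t} s / (K^2 - s) <= 2 t^2 / K^2 once 2 t <= K^2,
   and Markov's inequality gives P (C_t - C~_t > eps K) <= 2 t^2 / (eps K^3), which is at
   most (2 / eps) K^(2 alpha - 1) for t <= K^(1 + alpha). *)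

theory Submission
  imports Defs
begin

definition filled :: "(nat \<times> nat \<Rightarrow> nat) \<Rightarrow> (nat \<times> nat) set" where
  "filled Psi = {d. Psi d \<noteq> 0}"

definition state_inv :: "nat \<Rightarrow> mstate \<Rightarrow> bool" where
  "state_inv t s \<longleftrightarrow>
     finite (filled (st_Psi s)) \<and> card (filled (st_Psi s)) \<le> t \<and> st_Ct s \<le> st_C s"

lemma filled_fun_upd: "filled (Psi(a := v)) \<subseteq> insert a (filled Psi)"
  by (auto simp: filled_def)

lemma state_inv_fun_upd:
  assumes "state_inv t (R, C, Ct, Psi)" "Ct' \<le> C'"
  shows "state_inv (Suc t) (R', C', Ct', Psi(a := v))"
proof -
  have fin: "finite (filled Psi)" and card: "card (filled Psi) \<le> t"
    using assms(1) by (simp_all add: state_inv_def st_Psi_def)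
  have "card (filled (Psi(a := v))) \<le> card (insert a (filled Psi))"
    using fin filled_fun_upd by (intro card_mono) auto
  also have "\<dots> \<le> Suc t"
    using card by (simp add: card_insert_if fin)
  finally have "card (filled (Psi(a := v))) \<le> Suc t" .
  moreover have "finite (filled (Psi(a := v)))"
    using fin filled_fun_upd by (meson finite_insert finite_subset)
  ultimately show ?thesis
    using assms(2) by (simp add: state_inv_def st_Psi_def st_C_def st_Ct_def)
qed

lemma state_inv_step:
  assumes "state_inv t s" "s' \<in> set_pmf (step K t s)"
  shows "state_inv (Suc t) s'"
proof -
  obtain R C Ct Psi where s: "s = (R, C, Ct, Psi)" by (cases s)
  have inv: "state_inv t (R, C, Ct, Psi)" and "Ct \<le> C"
    using assms(1) by (simp_all add: s state_inv_def st_C_def st_Ct_def)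
  consider "t = 0" | "0 < t" "K\<^sup>2 \<le> t" | "0 < t" "t < K\<^sup>2" by linarith
  then show ?thesis
  proof cases
    case 1
    with assms(2) state_inv_fun_upd[OF inv, of 1 1] show ?thesis
      by (simp add: s step_def st_Psi_def)
  next
    case 2
    with assms show ?thesis
      by (auto simp: step_def state_inv_def)
  next
    case 3
    with assms(2) \<open>Ct \<le> C\<close> show ?thesis
      unfolding s step_def
      by (auto simp: Let_def st_R_def st_C_def st_Ct_def st_Psi_def
            intro!: state_inv_fun_upd[OF inv] split: if_splits prod.splits)
  qed
qed

lemma state_inv_proc: "s \<in> set_pmf (proc K t) \<Longrightarrow> state_inv t s"
proof (induction t arbitrary: s)
  case 0
  then show ?case by (simp add: state_inv_def filled_def st_Psi_def st_C_def st_Ct_def)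
next
  case (Suc t)
  then obtain s0 where "s0 \<in> set_pmf (proc K t)" "s \<in> set_pmf (step K t s0)" by auto
  with Suc.IH state_inv_step show ?case by blast
qed

definition gap :: "mstate \<Rightarrow> nat" where
  "gap s = st_C s - st_Ct s"

lemma emeasure_rejection_sample_rejected_le:
  assumes "finite (filled Psi)" "0 < R" "0 < K"
  shows "emeasure (rejection_sample K R Psi) {w. \<not> fst w}
           \<le> ennreal (real (card (filled Psi)) / (real R * real K))"
proof -
  define S where "S = {1..R} \<times> {1..K}"
  have S: "finite S" "S \<noteq> {}" "card S = R * K"
    using assms by (auto simp: S_def)
  have "emeasure (rejection_sample K R Psi) {w. \<not> fst w}
          = (\<integral>\<^sup>+d. indicator (filled Psi) d \<partial>pmf_of_set S)"
    unfolding rejection_sample_def S_def[symmetric] emeasure_bind_pmf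
    by (intro nn_integral_cong)
      (auto simp: filled_def indicator_def vimage_def measure_pmf.emeasure_space_1)
  also have "\<dots> = ennreal (real (card (S \<inter> filled Psi)) / real (R * K))"
    using S by (simp add: emeasure_pmf_of_set)
  also have "\<dots> \<le> ennreal (real (card (filled Psi)) / (real R * real K))"
    using assms by (auto intro!: ennreal_leI divide_right_mono card_mono)
  finally show ?thesis .
qed

lemma nn_integral_bernoulli_pmf_le:
  assumes "f True \<le> c" "f False \<le> c + d"
  shows "(\<integral>\<^sup>+b. f b \<partial>bernoulli_pmf p) \<le> c + ennreal (pmf (bernoulli_pmf p) False) * d"
proof -
  define q where "q = pmf (bernoulli_pmf p) False"
  have q: "0 \<le> q" "pmf (bernoulli_pmf p) True = 1 - q"
    by (simp_all add: q_def bernoulli_pmf.rep_eq)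
  have "(\<integral>\<^sup>+b. f b \<partial>bernoulli_pmf p) = f True * ennreal (1 - q) + f False * ennreal q"
    by (subst nn_integral_measure_pmf_support[of UNIV]) (auto simp: UNIV_bool q q_def)
  also have "\<dots> \<le> c * ennreal (1 - q) + (c + d) * ennreal q"
    using assms by (intro add_mono mult_right_mono) auto
  also have "\<dots> = c * (ennreal (1 - q) + ennreal q) + ennreal q * d"
    by (simp add: algebra_simps)
  also have "ennreal (1 - q) + ennreal q = 1"
    using q(1) q_def by (simp add: bernoulli_pmf.rep_eq flip: ennreal_plus)
  finally show ?thesis by (simp add: q_def)
qed

lemma pmf_bernoulli_no_new_row_le:
  fixes K R t :: nat
  assumes "t < K\<^sup>2"
  shows "pmf (bernoulli_pmf (real ((K - R) * K) / real (K\<^sup>2 - t))) False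
           \<le> real R * real K / real (K\<^sup>2 - t)"
proof -
  define N where "N = real (K\<^sup>2 - t)"
  have "real t < real K * real K"
    using assms by (simp add: power2_eq_square flip: of_nat_mult)
  then have N: "0 < N" "N \<le> real K * real K"
    using assms by (simp_all add: N_def of_nat_diff power2_eq_square)
  have "real K * real K - real R * real K \<le> real ((K - R) * K)"
    by (cases "R \<le> K") (simp_all add: of_nat_diff algebra_simps mult_left_mono)
  then have "(N - real ((K - R) * K)) / N \<le> real R * real K / N"
    using N by (intro divide_right_mono) auto
  then have "1 - real ((K - R) * K) / N \<le> real R * real K / N"
    using N(1) by (simp add: diff_divide_distrib)
  moreover have "0 \<le> real R * real K / N"
    using N by simp
  ultimately show ?thesis
    by (simp add: bernoulli_pmf.rep_eq N_def[symmetric])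
qed

lemma no_new_row_rejected_le:
  assumes "finite (filled Psi)" "card (filled Psi) \<le> t" "t < K\<^sup>2"
  shows "ennreal (pmf (bernoulli_pmf (real ((K - R) * K) / real (K\<^sup>2 - t))) False)
           * emeasure (rejection_sample K R Psi) {w. \<not> fst w}
         \<le> ennreal (real t / real (K\<^sup>2 - t))"
proof (cases "R = 0")
  case True
  then show ?thesis
    using pmf_bernoulli_no_new_row_le[OF assms(3), of R] by simp
next
  case False
  have "0 < K" using assms(3) by (cases K) auto
  have "emeasure (rejection_sample K R Psi) {w. \<not> fst w}
          \<le> ennreal (real (card (filled Psi)) / (real R * real K))"
    using False \<open>0 < K\<close> by (intro emeasure_rejection_sample_rejected_le assms(1)) auto
  also have "\<dots> \<le> ennreal (real t / (real R * real K))"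
    using assms(2) by (intro ennreal_leI divide_right_mono) auto
  finally have "ennreal (pmf (bernoulli_pmf (real ((K - R) * K) / real (K\<^sup>2 - t))) False)
        * emeasure (rejection_sample K R Psi) {w. \<not> fst w}
      \<le> ennreal (real R * real K / real (K\<^sup>2 - t)) * ennreal (real t / (real R * real K))"
    using pmf_bernoulli_no_new_row_le[OF assms(3), of R] by (intro mult_mono ennreal_leI) auto
  also have "\<dots> = ennreal (real t / real (K\<^sup>2 - t))"
    using False \<open>0 < K\<close> by (simp flip: ennreal_mult)
  finally show ?thesis .
qed

lemma nn_integral_gap_random_step:
  assumes inv: "state_inv t s" and t: "0 < t" "t < K\<^sup>2"
  shows "(\<integral>\<^sup>+s'. of_nat (gap s') \<partial>step K t s)
           \<le> of_nat (gap s) + ennreal (real t / real (K\<^sup>2 - t))"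
proof -
  obtain R C Ct Psi where s: "s = (R, C, Ct, Psi)" by (cases s)
  have fin: "finite (filled Psi)" and card: "card (filled Psi) \<le> t" and "Ct \<le> C"
    using inv by (simp_all add: s state_inv_def st_Psi_def st_C_def st_Ct_def)
  define p where "p = real ((K - R) * K) / real (K\<^sup>2 - t)"
  define new_row where "new_row = bind_pmf (bernoulli_pmf (real (K - C) / real K)) (\<lambda>newcol.
      if newcol then return_pmf (R + 1, C + 1, Ct + 1, Psi((R + 1, C + 1) := t + 1))
      else map_pmf (\<lambda>z. (R + 1, C, Ct, Psi((R + 1, z) := t + 1))) (pmf_of_set {1..C}))"
  define old_row where "old_row = map_pmf (\<lambda>(U, (x, y)).
      if C < y then (R, C + 1, (if U then Ct + 1 else Ct), Psi((x, C + 1) := t + 1))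
      else (R, C, Ct, Psi((x, y) := t + 1))) (rejection_sample K R Psi)"
  define rejected where "rejected = emeasure (rejection_sample K R Psi) {w. \<not> fst w}"
  have step_eq: "step K t s = bind_pmf (bernoulli_pmf p) (\<lambda>b. if b then new_row else old_row)"
    unfolding p_def new_row_def old_row_def
    using t by (simp add: s step_def Let_def st_R_def st_C_def st_Ct_def st_Psi_def)
  \<comment> \<open>A new row leaves the gap unchanged; in an old row the gap grows by at most one,
    and only if the first draw was rejected.\<close>
  have "gap s' = gap s" if "s' \<in> set_pmf new_row" for s'
    using that by (auto simp: new_row_def s gap_def st_C_def st_Ct_def split: if_splits)
  then have "(\<integral>\<^sup>+s'. of_nat (gap s') \<partial>new_row) = (\<integral>\<^sup>+s'. of_nat (gap s) \<partial>new_row)"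
    by (intro nn_integral_cong_AE) (simp add: AE_measure_pmf_iff)
  then have "(\<integral>\<^sup>+s'. of_nat (gap s') \<partial>new_row) = of_nat (gap s)"
    by (simp add: measure_pmf.emeasure_space_1)
  moreover have "(\<integral>\<^sup>+s'. of_nat (gap s') \<partial>old_row) \<le> of_nat (gap s) + rejected"
  proof -
    have "(\<integral>\<^sup>+s'. of_nat (gap s') \<partial>old_row)
            \<le> (\<integral>\<^sup>+w. of_nat (gap s) + indicator {w. \<not> fst w} w \<partial>rejection_sample K R Psi)"
      unfolding old_row_def nn_integral_map_pmf
      using \<open>Ct \<le> C\<close>
      by (intro nn_integral_mono) (auto simp: s gap_def st_C_def st_Ct_def Suc_diff_le)
    also have "\<dots> = of_nat (gap s) + rejected"
      by (simp add: rejected_def nn_integral_add measure_pmf.emeasure_space_1)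
    finally show ?thesis .
  qed
  ultimately have "(\<integral>\<^sup>+s'. of_nat (gap s') \<partial>step K t s)
      \<le> of_nat (gap s) + ennreal (pmf (bernoulli_pmf p) False) * rejected"
    unfolding step_eq nn_integral_bind_pmf by (intro nn_integral_bernoulli_pmf_le) auto
  also have "ennreal (pmf (bernoulli_pmf p) False) * rejected \<le> ennreal (real t / real (K\<^sup>2 - t))"
    unfolding p_def rejected_def by (rule no_new_row_rejected_le[OF fin card t(2)])
  finally show ?thesis by (simp add: add_left_mono)
qed

text \<open>For \<open>t = 0\<close> and \<open>t \<ge> K\<^sup>2\<close> the increment \<open>real t / real (K\<^sup>2 - t)\<close> is 0
  (truncated subtraction, division by zero), matching the deterministic steps.\<close>

lemma nn_integral_gap_step:
  assumes "state_inv t s"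
  shows "(\<integral>\<^sup>+s'. of_nat (gap s') \<partial>step K t s)
           \<le> of_nat (gap s) + ennreal (real t / real (K\<^sup>2 - t))"
proof -
  consider "t = 0" | "0 < t" "K\<^sup>2 \<le> t" | "0 < t" "t < K\<^sup>2" by linarith
  then show ?thesis
  proof cases
    case 1
    then show ?thesis by (simp add: step_def gap_def st_C_def st_Ct_def)
  next
    case 2
    then show ?thesis by (simp add: step_def Let_def)
  next
    case 3
    with assms show ?thesis by (rule nn_integral_gap_random_step)
  qed
qed

lemma nn_integral_gap_proc:
  "(\<integral>\<^sup>+s. of_nat (gap s) \<partial>proc K t) \<le> ennreal (\<Sum>i<t. real i / real (K\<^sup>2 - i))"
proof (induction t)
  case 0
  then show ?case by (simp add: gap_def st_C_def st_Ct_def)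
next
  case (Suc t)
  have "(\<integral>\<^sup>+s. of_nat (gap s) \<partial>proc K (Suc t))
      = (\<integral>\<^sup>+s. (\<integral>\<^sup>+s'. of_nat (gap s') \<partial>step K t s) \<partial>proc K t)"
    by simp
  also have "\<dots> \<le> (\<integral>\<^sup>+s. of_nat (gap s) + ennreal (real t / real (K\<^sup>2 - t)) \<partial>proc K t)"
    by (intro nn_integral_mono_AE AE_pmfI nn_integral_gap_step state_inv_proc)
  also have "\<dots> = (\<integral>\<^sup>+s. of_nat (gap s) \<partial>proc K t) + ennreal (real t / real (K\<^sup>2 - t))"
    by (simp add: nn_integral_add measure_pmf.emeasure_space_1)
  also have "\<dots> \<le> ennreal (\<Sum>i<t. real i / real (K\<^sup>2 - i)) + ennreal (real t / real (K\<^sup>2 - t))"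
    using Suc.IH by (rule add_right_mono)
  also have "\<dots> = ennreal (\<Sum>i<Suc t. real i / real (K\<^sup>2 - i))"
    by (simp add: ennreal_plus sum_nonneg)
  finally show ?case .
qed

lemma prob_gap_ge_le:
  assumes "0 < c"
  shows "measure_pmf.prob (proc K t) {s. c \<le> real (gap s)} \<le> (\<Sum>i<t. real i / real (K\<^sup>2 - i)) / c"
proof -
  have "emeasure (proc K t) {s \<in> UNIV. 1 \<le> ennreal (1 / c) * of_nat (gap s)}
      \<le> ennreal (1 / c) * (\<integral>\<^sup>+s. of_nat (gap s) * indicator UNIV s \<partial>proc K t)"
    by (intro nn_integral_Markov_inequality) auto
  also have "\<dots> \<le> ennreal (1 / c) * ennreal (\<Sum>i<t. real i / real (K\<^sup>2 - i))"
    using nn_integral_gap_proc by (simp add: mult_left_mono)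
  finally show ?thesis
    using assms
    by (simp add: measure_pmf.emeasure_eq_measure ennreal_of_nat_eq_real_of_nat field_simps
        sum_nonneg flip: ennreal_mult)
qed

lemma sum_div_square_diff_le:
  assumes "2 * t \<le> K\<^sup>2"
  shows "(\<Sum>i<t. real i / real (K\<^sup>2 - i)) \<le> 2 * real t ^ 2 / real K ^ 2"
proof (cases "t = 0")
  case False
  have "real i / real (K\<^sup>2 - i) \<le> real t / (real K ^ 2 / 2)" if "i < t" for i
  proof (rule frac_le)
    show "real K ^ 2 / 2 \<le> real (K\<^sup>2 - i)"
      using assms that by (simp add: of_nat_diff flip: of_nat_power)
    have "0 < K"
      using assms False by (cases K) auto
    then show "0 < real K ^ 2 / 2"
      by simp
  qed (use that in auto)
  then have "(\<Sum>i<t. real i / real (K\<^sup>2 - i)) \<le> (\<Sum>i<t. real t / (real K ^ 2 / 2))"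
    by (intro sum_mono) simp
  also have "\<dots> = 2 * real t ^ 2 / real K ^ 2"
    by (simp add: power2_eq_square)
  finally show ?thesis .
qed simp

lemma prob_normalized_gap_gt_le:
  assumes "0 < \<epsilon>" "0 < K" "2 * t \<le> K\<^sup>2"
  shows "measure_pmf.prob (proc K t) {s. \<bar>real (st_C s) - real (st_Ct s)\<bar> / real K > \<epsilon>}
           \<le> 2 * real t ^ 2 / (\<epsilon> * real K ^ 3)"
proof -
  have "\<epsilon> * real K \<le> real (gap s)"
    if "s \<in> set_pmf (proc K t)" "\<bar>real (st_C s) - real (st_Ct s)\<bar> / real K > \<epsilon>" for s
  proof -
    have "st_Ct s \<le> st_C s"
      using state_inv_proc[OF that(1)] by (simp add: state_inv_def)
    then have "\<bar>real (st_C s) - real (st_Ct s)\<bar> = real (gap s)"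
      by (simp add: gap_def)
    with that(2) assms(2) show ?thesis
      by (simp add: pos_less_divide_eq mult_ac)
  qed
  then have "measure_pmf.prob (proc K t) {s. \<bar>real (st_C s) - real (st_Ct s)\<bar> / real K > \<epsilon>}
      \<le> measure_pmf.prob (proc K t) {s. \<epsilon> * real K \<le> real (gap s)}"
    by (intro measure_pmf.finite_measure_mono_AE AE_pmfI) auto
  also have "\<dots> \<le> (\<Sum>i<t. real i / real (K\<^sup>2 - i)) / (\<epsilon> * real K)"
    using assms by (intro prob_gap_ge_le) simp
  also have "\<dots> \<le> 2 * real t ^ 2 / real K ^ 2 / (\<epsilon> * real K)"
    using assms by (intro divide_right_mono sum_div_square_diff_le) auto
  also have "\<dots> = 2 * real t ^ 2 / (\<epsilon> * real K ^ 3)"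
    by (simp add: divide_divide_eq_left power2_eq_square power3_eq_cube mult_ac)
  finally show ?thesis .
qed

lemma two_powr_le_square:
  fixes k a :: real
  assumes "4 \<le> k" "a \<le> 3/2"
  shows "2 * k powr a \<le> k\<^sup>2"
proof -
  have "2 \<le> k powr (1/2)"
    using assms(1) real_sqrt_le_mono[of 4 k] by (simp add: powr_half_sqrt)
  moreover have "k powr a \<le> k powr (3/2)"
    using assms by (intro powr_mono) auto
  ultimately have "2 * k powr a \<le> k powr (1/2) * k powr (3/2)"
    by (intro mult_mono) auto
  also have "\<dots> = k\<^sup>2"
    using assms(1) by (simp flip: powr_add powr_numeral)
  finally show ?thesis .
qed

lemma prob_normalized_gap_gt_le_powr:
  assumes "\<alpha> < 1/2" "0 < \<epsilon>" "4 \<le> K" "real t \<le> real K powr (1 + \<alpha>)"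
  shows "measure_pmf.prob (proc K t) {s. \<bar>real (st_C s) - real (st_Ct s)\<bar> / real K > \<epsilon>}
           \<le> 2 / \<epsilon> * real K powr (2 * \<alpha> - 1)"
proof -
  define k where "k = real K"
  have "k \<ge> 4"
    using assms(3) by (simp add: k_def)
  have "real (2 * t) \<le> real (K\<^sup>2)"
    using assms two_powr_le_square[of k "1 + \<alpha>"] by (simp add: k_def)
  then have "2 * t \<le> K\<^sup>2"
    by (simp only: of_nat_le_iff)
  with assms have "measure_pmf.prob (proc K t) {s. \<bar>real (st_C s) - real (st_Ct s)\<bar> / real K > \<epsilon>}
      \<le> 2 * real t ^ 2 / (\<epsilon> * k ^ 3)"
    unfolding k_def by (intro prob_normalized_gap_gt_le) auto
  also have "\<dots> = 2 / \<epsilon> * (real t * real t / k powr 3)"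
    using \<open>k \<ge> 4\<close> by (simp add: power2_eq_square)
  also have "\<dots> \<le> 2 / \<epsilon> * (k powr (1 + \<alpha>) * k powr (1 + \<alpha>) / k powr 3)"
    using assms(2,4) by (intro mult_left_mono divide_right_mono mult_mono) (auto simp: k_def)
  also have "k powr (1 + \<alpha>) * k powr (1 + \<alpha>) / k powr 3 = k powr (2 * \<alpha> - 1)"
  proof -
    have "2 * \<alpha> - 1 = (1 + \<alpha>) + (1 + \<alpha>) - 3" by simp
    then show ?thesis by (simp only: powr_diff powr_add)
  qed
  finally show ?thesis
    by (simp add: k_def)
qed

theorem corollary6p4:
  fixes \<alpha> :: real and t :: "nat \<Rightarrow> nat"
  assumes "0 < \<alpha>" and "\<alpha> < 1/2"
    and "\<forall>K\<ge>2. real (t K) \<le> real K powr (1 + \<alpha>)"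
  shows "\<forall>\<epsilon>>0. (\<lambda>K. measure_pmf.prob (proc K (t K))
            {s. \<bar>real (st_C s) - real (st_Ct s)\<bar> / real K > \<epsilon>}) \<longlonglongrightarrow> 0"
proof (intro allI impI)
  fix \<epsilon> :: real
  assume "0 < \<epsilon>"
  have bound_tendsto: "(\<lambda>K. 2 / \<epsilon> * real K powr (2 * \<alpha> - 1)) \<longlonglongrightarrow> 0"
    using assms(2) by (intro tendsto_mult_right_zero tendsto_neg_powr filterlim_real_sequentially) auto
  have "\<forall>\<^sub>F K in sequentially. measure_pmf.prob (proc K (t K))
      {s. \<bar>real (st_C s) - real (st_Ct s)\<bar> / real K > \<epsilon>} \<le> 2 / \<epsilon> * real K powr (2 * \<alpha> - 1)"
    using eventually_ge_at_top[of "4::nat"]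
  proof eventually_elim
    case (elim K)
    with assms(3) have "real (t K) \<le> real K powr (1 + \<alpha>)"
      by simp
    with assms(2) \<open>0 < \<epsilon>\<close> elim show ?case
      by (rule prob_normalized_gap_gt_le_powr)
  qed
  then show "(\<lambda>K. measure_pmf.prob (proc K (t K))
      {s. \<bar>real (st_C s) - real (st_Ct s)\<bar> / real K > \<epsilon>}) \<longlonglongrightarrow> 0"
    by (intro tendsto_sandwich[OF _ _ tendsto_const bound_tendsto]) simp_all
qed

end
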